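(* Let $p\ge1$ and let $f\colon[0,1]\to\mathbb{R}$ be bounded and of finite $p$-variation $V_p(f)$. Then for every $x>0$, $$\left|\int_0^1 f(t)e(xt)\,dt\right|\le V_p(f)\left(\frac1x\right)^{\frac1p}+\frac{\|f\|_{L^\infty}}{x}.$$
   Context: $e(t):=e^{-2\pi\mathrm{i}t}$. For $p\ge1$ the $p$-variation of $f\colon[0,1]\to\mathbb{C}$ is $V_p(f)=\left(\sup\sum_{k=1}^n|f(x_k)-f(x_{k-1})|^p\right)^{1/p}\in[0,\infty]$, the supremum over all $n\in\mathbb{N}$ and partitions $0=x_0<x_1<\dots<x_n=1$; $f$ is of finite $p$-variation if $V_p(f)<\infty$. *)

theory Defs
  imports "HOL-Analysis.Analysis"
begin

definition e :: "real \<Rightarrow> complex" where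
  "e t = exp (- 2 * complex_of_real pi * \<i> * complex_of_real t)"

definition pvar_sums :: "real \<Rightarrow> (real \<Rightarrow> 'a::real_normed_vector) \<Rightarrow> real set" where
  "pvar_sums p f = {(\<Sum>k\<in>{1..n}. norm (f (x k) - f (x (k - 1))) powr p) | n x.
       n \<ge> 1 \<and> x 0 = 0 \<and> x n = 1 \<and> (\<forall>k<n. x k < x (Suc k))}"

definition finite_pvariation :: "real \<Rightarrow> (real \<Rightarrow> 'a::real_normed_vector) \<Rightarrow> bool" where
  "finite_pvariation p f \<longleftrightarrow> bdd_above (pvar_sums p f)"

definition pvariation :: "real \<Rightarrow> (real \<Rightarrow> 'a::real_normed_vector) \<Rightarrow> real" where
  "pvariation p f = (Sup (pvar_sums p f)) powr (1 / p)"

definition Linf_norm :: "(real \<Rightarrow> real) \<Rightarrow> real" where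
  "Linf_norm f = Inf {C. C \<ge> 0 \<and> (AE t in lebesgue. t \<in> {0..1} \<longrightarrow> \<bar>f t\<bar> \<le> C)}"

end

(* Let m = floor x and split [0,1] at m/x.  The interval [0, m/x] consists of m full periods
   of t -> e(x t); folding them onto [0, 1/x] turns the integral into
   int_0^(1/x) e(x s) * sum_{k<m} f(k/x + s) ds.  Since e(x s) has mean zero over a period, f(k/x + s)
   may be replaced by the increment f(k/x + s) - f(k/x).  For fixed s these m increments live on
   disjoint intervals, so by Hoelder their sum is at most m^(1-1/p) V_p(f) <= x^(1-1/p) V_p(f), and
   integrating over an interval of length 1/x gives V_p(f) x^(-1/p).  The leftover interval
   [m/x, 1] has length at most 1/x and contributes at most ||f||_inf / x. *)

theory Submission
  imports Defs
begin

lemma sum_le_card_powr_mult_sum_powr: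
  fixes a :: "'i \<Rightarrow> real"
  assumes p: "1 \<le> p" and A: "finite A" and nonneg: "\<And>i. i \<in> A \<Longrightarrow> 0 \<le> a i"
  shows "(\<Sum>i\<in>A. a i) \<le> real (card A) powr (1 - 1/p) * (\<Sum>i\<in>A. a i powr p) powr (1/p)"
proof -
  \<comment> \<open>\<open>powr_convex\<close> only holds on \<open>{0<..}\<close>, so Jensen is applied to the positive terms.\<close>
  define P where "P = {i\<in>A. 0 < a i}"
  define n where "n = real (card P)"
  have P: "finite P" "P \<subseteq> A" using A by (auto simp: P_def)
  have sum_P: "(\<Sum>i\<in>A. a i) = (\<Sum>i\<in>P. a i)" "(\<Sum>i\<in>A. a i powr p) = (\<Sum>i\<in>P. a i powr p)"
    by (intro sum.mono_neutral_right[OF A P(2)]; use nonneg in \<open>force simp: P_def\<close>)+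
  have "(\<Sum>i\<in>P. a i) \<le> n powr (1 - 1/p) * (\<Sum>i\<in>P. a i powr p) powr (1/p)"
  proof (cases "P = {}")
    case False
    then have n: "0 < n" using P by (simp add: n_def card_gt_0_iff)
    have jensen: "((\<Sum>i\<in>P. a i) / n) powr p \<le> (\<Sum>i\<in>P. a i powr p) / n"
      using convex_on_sum[OF P(1) False powr_convex[OF p], of "\<lambda>_. 1/n" a] n
      by (simp add: P_def n_def sum_divide_distrib sum_distrib_left)
    have "0 \<le> (\<Sum>i\<in>P. a i)"
      by (intro sum_nonneg) (auto simp: P_def)
    then have "(\<Sum>i\<in>P. a i) / n = (((\<Sum>i\<in>P. a i) / n) powr p) powr (1/p)"
      using p n by (simp add: powr_powr)
    also have "\<dots> \<le> ((\<Sum>i\<in>P. a i powr p) / n) powr (1/p)"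
      using jensen p by (intro powr_mono2) auto
    finally have "(\<Sum>i\<in>P. a i) / n \<le> ((\<Sum>i\<in>P. a i powr p) / n) powr (1/p)" .
    then have "(\<Sum>i\<in>P. a i) \<le> n * ((\<Sum>i\<in>P. a i powr p) powr (1/p) / n powr (1/p))"
      using n by (simp add: powr_divide sum_nonneg field_simps)
    then show ?thesis
      using n by (simp add: powr_diff)
  qed simp
  also have "\<dots> \<le> real (card A) powr (1 - 1/p) * (\<Sum>i\<in>P. a i powr p) powr (1/p)"
    using p card_mono[OF A P(2)] by (intro mult_right_mono powr_mono2) (auto simp: n_def)
  finally show ?thesis using sum_P by simp
qed

lemma pvar_sums_Sup_nonneg:
  assumes "finite_pvariation p f"
  shows "0 \<le> Sup (pvar_sums p f)"
proof -
  have "norm (f 1 - f 0) powr p \<in> pvar_sums p f"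
    unfolding pvar_sums_def by (intro CollectI exI[of _ 1] exI[of _ real]) auto
  then show ?thesis
    using assms unfolding finite_pvariation_def by (meson cSup_upper order_trans powr_ge_zero)
qed

lemma pvar_sum_le_Sup_from_0:
  fixes f :: "real \<Rightarrow> 'a::real_normed_vector"
  assumes fp: "finite_pvariation p f" and inc: "\<forall>k<n. y k < y (Suc k)"
    and n: "1 \<le> n" and y0: "y 0 = 0" and yn: "y n \<le> 1"
  shows "(\<Sum>k\<in>{1..n}. norm (f (y k) - f (y (k - 1))) powr p) \<le> Sup (pvar_sums p f)"
proof (cases "y n = 1")
  case True
  then have "(\<Sum>k\<in>{1..n}. norm (f (y k) - f (y (k - 1))) powr p) \<in> pvar_sums p f"
    unfolding pvar_sums_def using y0 inc n by blast
  then show ?thesis using fp unfolding finite_pvariation_def by (rule cSup_upper)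
next
  case False
  define z where "z k = (if k \<le> n then y k else 1)" for k
  have "(\<Sum>k\<in>{1..Suc n}. norm (f (z k) - f (z (k - 1))) powr p) \<in> pvar_sums p f"
    unfolding pvar_sums_def
  proof (intro CollectI exI conjI)
    show "\<forall>k<Suc n. z k < z (Suc k)"
      using inc False yn by (auto simp: z_def less_Suc_eq)
  qed (use y0 in \<open>auto simp: z_def\<close>)
  then have "(\<Sum>k\<in>{1..Suc n}. norm (f (z k) - f (z (k - 1))) powr p) \<le> Sup (pvar_sums p f)"
    using fp unfolding finite_pvariation_def by (rule cSup_upper)
  moreover have "(\<Sum>k\<in>{1..Suc n}. norm (f (z k) - f (z (k - 1))) powr p)
      = (\<Sum>k\<in>{1..n}. norm (f (y k) - f (y (k - 1))) powr p) + norm (f 1 - f (y n)) powr p"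
    by (simp add: z_def, intro sum.cong) auto
  ultimately show ?thesis
    by (smt (verit) powr_ge_zero)
qed

lemma pvar_sum_le_Sup:
  fixes f :: "real \<Rightarrow> 'a::real_normed_vector"
  assumes fp: "finite_pvariation p f" and inc: "\<forall>k<n. y k < y (Suc k)"
    and y0: "0 \<le> y 0" and yn: "y n \<le> 1"
  shows "(\<Sum>k\<in>{1..n}. norm (f (y k) - f (y (k - 1))) powr p) \<le> Sup (pvar_sums p f)"
proof (cases "n = 0 \<or> y 0 = 0")
  case True
  then show ?thesis
    using pvar_sums_Sup_nonneg[OF fp] pvar_sum_le_Sup_from_0[OF fp inc _ _ yn] by force
next
  case False
  define z where "z k = (if k = 0 then 0 else y (k - 1))" for k
  have "\<forall>k<Suc n. z k < z (Suc k)"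
    using inc y0 False by (auto simp: z_def less_Suc_eq_0_disj)
  then have "(\<Sum>k\<in>{1..Suc n}. norm (f (z k) - f (z (k - 1))) powr p) \<le> Sup (pvar_sums p f)"
    by (rule pvar_sum_le_Sup_from_0[OF fp]) (use yn in \<open>auto simp: z_def\<close>)
  moreover have "(\<Sum>k\<in>{1..Suc n}. norm (f (z k) - f (z (k - 1))) powr p)
      = norm (f (y 0) - f 0) powr p + (\<Sum>k\<in>{Suc 1..Suc n}. norm (f (z k) - f (z (k - 1))) powr p)"
    by (subst sum.atLeast_Suc_atMost) (auto simp: z_def)
  moreover have "(\<Sum>k\<in>{Suc 1..Suc n}. norm (f (z k) - f (z (k - 1))) powr p)
      = (\<Sum>k\<in>{1..n}. norm (f (y k) - f (y (k - 1))) powr p)"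
    by (subst sum.shift_bounds_cl_Suc_ivl) (rule sum.cong, auto simp: z_def)
  ultimately show ?thesis
    by (smt (verit) powr_ge_zero)
qed

lemma interlaced_pvar_sum_le_Sup:
  fixes f :: "real \<Rightarrow> 'a::real_normed_vector"
  assumes fp: "finite_pvariation p f"
    and ab: "\<And>k. k < m \<Longrightarrow> a k < b k" and ba: "\<And>k. Suc k < m \<Longrightarrow> b k < a (Suc k)"
    and a0: "0 \<le> a 0" and b1: "\<And>k. k < m \<Longrightarrow> b k \<le> 1"
  shows "(\<Sum>k<m. norm (f (b k) - f (a k)) powr p) \<le> Sup (pvar_sums p f)"
proof (cases m)
  case 0
  then show ?thesis using pvar_sums_Sup_nonneg[OF fp] by simp
next
  case (Suc n)
  define y where "y j = (if even j then a (j div 2) else b (j div 2))" for j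
  define T where "T j = norm (f (y j) - f (y (j - 1))) powr p" for j
  have "y j < y (Suc j)" if "j < 2 * n + 1" for j
  proof (cases "even j")
    case True
    then show ?thesis using ab[of "j div 2"] Suc that by (auto simp: y_def)
  next
    case False
    then have "Suc j div 2 = Suc (j div 2)" "Suc (j div 2) < m" using that Suc by presburger+
    then show ?thesis using ba[of "j div 2"] False by (simp add: y_def)
  qed
  then have "(\<Sum>j\<in>{1..2 * n + 1}. T j) \<le> Sup (pvar_sums p f)"
    unfolding T_def by (intro pvar_sum_le_Sup[OF fp] allI impI) (use a0 b1 Suc in \<open>auto simp: y_def\<close>)
  moreover have "(\<Sum>k<m. norm (f (b k) - f (a k)) powr p) = (\<Sum>j\<in>(\<lambda>k. 2 * k + 1) ` {..<m}. T j)"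
    by (subst sum.reindex) (auto simp: inj_on_def T_def y_def)
  moreover have "\<dots> \<le> (\<Sum>j\<in>{1..2 * n + 1}. T j)"
    by (rule sum_mono2) (auto simp: T_def Suc)
  ultimately show ?thesis by linarith
qed

lemma norm_sum_interlaced_increments_le:
  fixes f :: "real \<Rightarrow> 'a::real_normed_vector"
  assumes p: "1 \<le> p" and fp: "finite_pvariation p f"
    and "\<And>k. k < m \<Longrightarrow> a k < b k" and "\<And>k. Suc k < m \<Longrightarrow> b k < a (Suc k)"
    and "0 \<le> a 0" and "\<And>k. k < m \<Longrightarrow> b k \<le> 1"
  shows "norm (\<Sum>k<m. f (b k) - f (a k)) \<le> real m powr (1 - 1/p) * pvariation p f"
proof -
  have "norm (\<Sum>k<m. f (b k) - f (a k)) \<le> (\<Sum>k<m. norm (f (b k) - f (a k)))"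
    by (rule norm_sum)
  also have "\<dots> \<le> real m powr (1 - 1/p) * (\<Sum>k<m. norm (f (b k) - f (a k)) powr p) powr (1/p)"
    using sum_le_card_powr_mult_sum_powr[OF p, of "{..<m}"] by simp
  also have "\<dots> \<le> real m powr (1 - 1/p) * pvariation p f"
    unfolding pvariation_def using p
    by (intro mult_left_mono powr_mono2 interlaced_pvar_sum_le_Sup[OF fp] assms sum_nonneg) auto
  finally show ?thesis .
qed

lemma norm_e [simp]: "norm (e t) = 1"
  unfolding e_def by (simp add: norm_exp_eq_Re)

lemma e_add_of_int: "e (of_int k + t) = e t"
proof -
  have "e (of_int k + t) = exp (- (2 * of_real pi * \<i> * of_int k)) * e t"
    unfolding e_def by (simp add: algebra_simps flip: exp_add)
  moreover have "exp (- (2 * of_real pi * \<i> * of_int k)) = 1"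
    using exp_integer_2pi[of "- of_int k"] by (simp add: mult_ac)
  ultimately show ?thesis by simp
qed

lemma has_integral_e_period:
  assumes x: "0 < x"
  shows "((\<lambda>s. e (x * s)) has_integral 0) {0..1/x}"
proof -
  define c where "c = - 2 * complex_of_real pi * \<i> * complex_of_real x"
  have c: "c \<noteq> 0" using x by (simp add: c_def)
  have e_eq: "e (x * s) = exp (c * complex_of_real s)" for s
    unfolding e_def c_def by (simp add: algebra_simps)
  have "((\<lambda>s. exp (c * complex_of_real s) / c) has_vector_derivative exp (c * complex_of_real s))
      (at s within {0..1/x})" for s
    using c by (intro has_vector_derivative_real_field) (auto intro!: derivative_eq_intros)
  then have "((\<lambda>s. exp (c * complex_of_real s)) has_integral
      (exp (c * complex_of_real (1/x)) / c - exp (c * complex_of_real 0) / c)) {0..1/x}"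
    using x by (intro fundamental_theorem_of_calculus) auto
  moreover have "exp (c * complex_of_real (1/x)) = 1"
    using x by (simp add: c_def exp_minus)
  ultimately show ?thesis by (simp add: e_eq)
qed

lemma has_integral_sum_translates:
  fixes g :: "real \<Rightarrow> 'a::banach"
  assumes d: "0 \<le> d" and g: "g integrable_on {0..real m * d}"
  shows "((\<lambda>s. \<Sum>k<m. g (real k * d + s)) has_integral integral {0..real m * d} g) {0..d}"
  using g
proof (induction m)
  case 0
  then show ?case by simp
next
  case (Suc m)
  have md: "0 \<le> real m * d" "real m * d \<le> real (Suc m) * d"
    using d by (simp_all add: mult_right_mono)
  have int: "g integrable_on {0..real m * d}" "g integrable_on {real m * d..real (Suc m) * d}"
    using md by (auto intro!: integrable_on_subinterval[OF Suc.prems])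
  have last: "((\<lambda>s. g (real m * d + s)) has_integral integral {real m * d..real (Suc m) * d} g) {0..d}"
    using has_integral_shift_Icc_real[of g "real m * d" _ 0 d] int(2)
    by (simp add: o_def algebra_simps integrable_integral)
  have "integral {0..real m * d} g + integral {real m * d..real (Suc m) * d} g
      = integral {0..real (Suc m) * d} g"
    using md Suc.prems by (intro Henstock_Kurzweil_Integration.integral_combine) auto
  then show ?case
    using has_integral_add[OF Suc.IH[OF int(1)] last] by simp
qed

lemma norm_integral_whole_periods_le:
  fixes f :: "real \<Rightarrow> real"
  assumes p: "1 \<le> p" and fp: "finite_pvariation p f" and x: "0 < x" and m: "real m \<le> x"
    and int: "(\<lambda>t. complex_of_real (f t) * e (x * t)) integrable_on {0..real m / x}"
  shows "norm (integral {0..real m / x} (\<lambda>t. complex_of_real (f t) * e (x * t)))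
    \<le> pvariation p f * (1/x) powr (1/p)"
proof -
  define h where "h = (\<lambda>t. complex_of_real (f t) * e (x * t))"
  define F where "F s = (\<Sum>k<m. f (real k / x + s) - f (real k / x))" for s
  define c where "c = complex_of_real (\<Sum>k<m. f (real k / x))"
  have translates: "((\<lambda>s. \<Sum>k<m. h (real k * (1/x) + s)) has_integral integral {0..real m / x} h) {0..1/x}"
    using has_integral_sum_translates[of "1/x" h m] int[folded h_def] x by simp
  have sum_eq: "(\<Sum>k<m. h (real k * (1/x) + s)) = e (x * s) * complex_of_real (F s) + e (x * s) * c" for s
  proof -
    have "e (x * (real k * (1/x) + s)) = e (x * s)" for k
      using e_add_of_int[of "int k" "x * s"] x by (simp add: distrib_left)
    then show ?thesis
      by (simp add: h_def F_def c_def sum_subtractf sum_distrib_left algebra_simps)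
  qed
  have "((\<lambda>s. e (x * s) * c) has_integral 0) {0..1/x}"
    using has_integral_mult_left[OF has_integral_e_period[OF x], of c] by simp
  from has_integral_diff[OF translates[unfolded sum_eq] this]
  have F_int: "((\<lambda>s. e (x * s) * complex_of_real (F s)) has_integral integral {0..real m / x} h) {0..1/x}"
    by simp
  have F_bound: "norm (e (x * s) * complex_of_real (F s)) \<le> real m powr (1 - 1/p) * pvariation p f"
    if s: "s \<in> {0..1/x} - {0, 1/x}" for s
  proof -
    have step: "real (Suc k) / x = real k / x + 1/x" for k
      by (simp add: add_divide_distrib)
    have "real (Suc k) / x \<le> 1" if "k < m" for k
      using that m x by (simp add: divide_le_eq_1)
    then have "norm (\<Sum>k<m. f (real k / x + s) - f (real k / x)) \<le> real m powr (1 - 1/p) * pvariation p f"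
      using s step by (intro norm_sum_interlaced_increments_le[OF p fp]) (fastforce simp del: of_nat_Suc)+
    then show ?thesis
      by (simp only: norm_mult norm_e norm_of_real real_norm_def mult_1 F_def)
  qed
  have "norm (integral {0..real m / x} h) \<le> real m powr (1 - 1/p) * pvariation p f * (1/x)"
    using has_integral_bound_real[OF _ _ F_int, of _ "{0, 1/x}"] F_bound x
    by (simp add: pvariation_def)
  also have "\<dots> \<le> x powr (1 - 1/p) * pvariation p f * (1/x)"
    using x p m by (intro mult_right_mono powr_mono2) (auto simp: pvariation_def)
  also have "\<dots> = pvariation p f * (1/x) powr (1/p)"
    using x by (simp add: powr_diff powr_divide)
  finally show ?thesis
    by (simp add: h_def)
qed

lemma norm_integral_le_AE_bound:
  fixes g :: "real \<Rightarrow> 'a::real_normed_vector"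
  assumes ab: "a \<le> b" and g: "g integrable_on {a..b}" and C: "0 \<le> C"
    and bound: "AE t in lebesgue. t \<in> {a..b} \<longrightarrow> norm (g t) \<le> C"
  shows "norm (integral {a..b} g) \<le> C * (b - a)"
proof -
  obtain N where N: "{t \<in> space lebesgue. \<not> (t \<in> {a..b} \<longrightarrow> norm (g t) \<le> C)} \<subseteq> N"
    "emeasure lebesgue N = 0" "N \<in> sets lebesgue"
    using bound by (rule AE_E)
  then have "negligible N"
    by (auto simp: negligible_iff_null_sets intro: null_setsI)
  then have "((\<lambda>t. if t \<in> N then 0 else g t) has_integral integral {a..b} g) {a..b}"
    by (rule has_integral_spike[OF _ _ integrable_integral[OF g]]) auto
  then show ?thesis
    unfolding content_real[OF ab, symmetric]
    by (rule has_integral_bound_real[OF C finite.emptyI]) (use N C in auto)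
qed

lemma bounded_imp_AE_bound:
  fixes f :: "real \<Rightarrow> real"
  assumes "bounded (f ` {0..1})"
  obtains C where "0 \<le> C" "AE t in lebesgue. t \<in> {0..1} \<longrightarrow> \<bar>f t\<bar> \<le> C"
proof -
  obtain B where "\<forall>y\<in>f ` {0..1}. norm y \<le> B"
    using assms by (auto simp: bounded_iff)
  then show ?thesis
    by (intro that[of "max B 0"] AE_I2) force+
qed

lemma Linf_norm_nonneg:
  assumes "bounded (f ` {0..1})"
  shows "0 \<le> Linf_norm f"
  unfolding Linf_norm_def using bounded_imp_AE_bound[OF assms]
  by (intro cInf_greatest) auto

lemma norm_integral_le_Linf_norm:
  fixes g :: "real \<Rightarrow> 'a::real_normed_vector"
  assumes f: "bounded (f ` {0..1})" and ab: "0 \<le> a" "a \<le> b" "b \<le> 1"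
    and g: "g integrable_on {a..b}" and dom: "\<And>t. t \<in> {a..b} \<Longrightarrow> norm (g t) \<le> \<bar>f t\<bar>"
  shows "norm (integral {a..b} g) \<le> Linf_norm f * (b - a)"
proof (cases "a = b")
  case False
  then have ba: "0 < b - a" using ab by simp
  have "norm (integral {a..b} g) / (b - a) \<le> Linf_norm f"
    unfolding Linf_norm_def
  proof (rule cInf_greatest)
    fix C assume "C \<in> {C. 0 \<le> C \<and> (AE t in lebesgue. t \<in> {0..1} \<longrightarrow> \<bar>f t\<bar> \<le> C)}"
    then have C: "0 \<le> C" and "AE t in lebesgue. t \<in> {a..b} \<longrightarrow> norm (g t) \<le> C"
      using dom ab by (auto elim!: eventually_mono intro: order_trans)
    then have "norm (integral {a..b} g) \<le> C * (b - a)"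
      by (rule norm_integral_le_AE_bound[OF \<open>a \<le> b\<close> g])
    then show "norm (integral {a..b} g) / (b - a) \<le> C"
      using ba by (simp add: divide_le_eq)
  qed (use bounded_imp_AE_bound[OF f] in blast)
  then show ?thesis
    using ba by (simp add: divide_le_eq)
qed simp

theorem mainTheorem2:
  fixes p x :: real and f :: "real \<Rightarrow> real"
  assumes "p \<ge> 1" and "bounded (f ` {0..1})" and "finite_pvariation p f" and "x > 0"
  shows "cmod (integral {0..1} (\<lambda>t. complex_of_real (f t) * e (x * t)))
           \<le> pvariation p f * (1 / x) powr (1 / p) + Linf_norm f / x"
proof -
  define h where "h = (\<lambda>t. complex_of_real (f t) * e (x * t))"
  define m where "m = nat \<lfloor>x\<rfloor>"
  have m: "real m \<le> x" "x < real m + 1" and a: "0 \<le> real m / x" "real m / x \<le> 1"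
    using assms(4) by (auto simp: m_def)
  show ?thesis
  proof (cases "h integrable_on {0..1}")
    case False
    then show ?thesis
      using Linf_norm_nonneg[OF assms(2)] assms(4)
      by (simp add: h_def[symmetric] not_integrable_integral pvariation_def)
  next
    case True
    have "integral {0..1} h = integral {0..real m / x} h + integral {real m / x..1} h"
      using a True by (simp add: Henstock_Kurzweil_Integration.integral_combine)
    then have "norm (integral {0..1} h) \<le> norm (integral {0..real m / x} h) + norm (integral {real m / x..1} h)"
      by (simp add: norm_triangle_ineq)
    moreover have "norm (integral {0..real m / x} h) \<le> pvariation p f * (1/x) powr (1/p)"
      unfolding h_def using assms(1,3,4) m(1) a
      by (intro norm_integral_whole_periods_le integrable_on_subinterval[OF True[unfolded h_def]]) auto
    moreover have "norm (integral {real m / x..1} h) \<le> Linf_norm f * (1 - real m / x)"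
      using a True by (intro norm_integral_le_Linf_norm[OF assms(2)] integrable_on_subinterval[OF True])
        (auto simp: h_def norm_mult)
    moreover have "Linf_norm f * (1 - real m / x) \<le> Linf_norm f / x"
    proof -
      have "1 - real m / x = (x - real m) / x"
        using assms(4) by (simp add: diff_divide_distrib)
      also have "\<dots> \<le> 1 / x"
        using m assms(4) by (intro divide_right_mono) auto
      finally show ?thesis
        using mult_left_mono[OF _ Linf_norm_nonneg[OF assms(2)]] by fastforce
    qed
    ultimately show ?thesis
      unfolding h_def[symmetric] by linarith
  qed
qed

end
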